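(* Let $\Lambda:=U(2)^{\oplus 3}\oplus E_8\oplus A_1^{\oplus 2}$ and let $u\in D_\Lambda=\Lambda^\vee/\Lambda$ satisfy $q(u)=1+2\mathbb{Z}$. Then there exists $x\in\Lambda$ with $x^2=-4$, $x.\Lambda=2\mathbb{Z}$ and $u=x/2+\Lambda$.
   Context: $U$ is the hyperbolic plane, $L(n)$ denotes $L$ with form scaled by $n$, ADE root lattices are negative definite. $q\colon D_\Lambda\to\mathbb{Q}/2\mathbb{Z}$ is the discriminant quadratic form $q(y+\Lambda)=y^2+2\mathbb{Z}$. *)

theory Defs
  imports Complex_Main
begin

text \<open>The lattice Lambda = U(2)^3 + E8 + A1^2 (rank 16), realised as Z^16 with
  Gram matrix lam_gram w.r.t. the standard basis e_0..e_15:
  indices 0-5: three copies of U(2) (Gram [[0,2],[2,0]]);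
  indices 6-13: E8 (negative definite, = minus the Cartan matrix, Bourbaki labelling);
  indices 14,15: two copies of A1 (Gram (-2)).\<close>

definition e8_edges :: "nat set set" where
  "e8_edges = {{0,2},{2,3},{3,4},{4,5},{5,6},{6,7},{1,3}}"

definition e8_cartan :: "nat \<Rightarrow> nat \<Rightarrow> int" where
  "e8_cartan a b = (if a = b then 2 else if {a, b} \<in> e8_edges then -1 else 0)"

definition lam_gram :: "nat \<Rightarrow> nat \<Rightarrow> int" where
  "lam_gram i j =
     (if i < 6 \<and> j < 6 then (if i div 2 = j div 2 \<and> i \<noteq> j then 2 else 0)
      else if 6 \<le> i \<and> i < 14 \<and> 6 \<le> j \<and> j < 14 then - e8_cartan (i - 6) (j - 6)
      else if 14 \<le> i \<and> i < 16 \<and> i = j then -2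
      else 0)"

definition lam_bil :: "(nat \<Rightarrow> rat) \<Rightarrow> (nat \<Rightarrow> rat) \<Rightarrow> rat" where
  "lam_bil x y = (\<Sum>i<16. \<Sum>j<16. of_int (lam_gram i j) * x i * y j)"

definition Lam :: "(nat \<Rightarrow> rat) set" where
  "Lam = {x. (\<forall>i. x i \<in> \<int>) \<and> (\<forall>i\<ge>16. x i = 0)}"

definition Lam_dual :: "(nat \<Rightarrow> rat) set" where
  "Lam_dual = {y. (\<forall>i\<ge>16. y i = 0) \<and> (\<forall>z\<in>Lam. lam_bil y z \<in> \<int>)}"

end

theory Submission
  imports Defs
begin

text \<open>
  The discriminant group of Lambda is (Z/2)^8: U(2) and A1 have dual lattice (1/2)U(2) and
  (1/2)A1, while E8 is unimodular (its inverse Cartan matrix is integral). So every class u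
  has a representative rho/2 with rho a 0/1-vector vanishing on the E8 block. As Lambda is
  even and such rho pairs into 2Z with Lambda, q(u) = rho^2/4
  = rho0 rho1 + rho2 rho3 + rho4 rho5 - (rho14 + rho15)/2 modulo 2. Changing the signs of
  rho1, rho3, rho5 keeps the class rho/2 + Lambda but flips the signs of the hyperbolic
  products, and q(u) = 1 mod 2 is exactly the parity condition under which the signs can be
  chosen so that x^2 = 4 (+-rho0 rho1 +- rho2 rho3 +- rho4 rho5) - 2 (rho14 + rho15) = -4.
  Such an x has a coordinate +-1 outside E8, whence x.Lambda = 2Z.
\<close>

lemma sum_lessThan_8:
  fixes f :: "nat \<Rightarrow> 'a::comm_monoid_add"
  shows "(\<Sum>i<8. f i) = f 0 + f 1 + f 2 + f 3 + f 4 + f 5 + f 6 + f 7"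
  by (simp add: eval_nat_numeral)

lemma sum_lessThan_16:
  fixes f :: "nat \<Rightarrow> 'a::comm_monoid_add"
  shows "(\<Sum>i<16. f i) = f 0 + f 1 + f 2 + f 3 + f 4 + f 5 + f 6 + f 7 + f 8 + f 9 + f 10 + f 11
     + f 12 + f 13 + f 14 + f 15"
  by (simp add: eval_nat_numeral)

lemma lam_bil_explicit:
  "lam_bil x y =
     2 * (x 0 * y 1 + x 1 * y 0 + x 2 * y 3 + x 3 * y 2 + x 4 * y 5 + x 5 * y 4)
     - 2 * (x 6 * y 6 + x 7 * y 7 + x 8 * y 8 + x 9 * y 9 + x 10 * y 10 + x 11 * y 11
            + x 12 * y 12 + x 13 * y 13)
     + (x 6 * y 8 + x 8 * y 6 + x 8 * y 9 + x 9 * y 8 + x 9 * y 10 + x 10 * y 9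
        + x 10 * y 11 + x 11 * y 10 + x 11 * y 12 + x 12 * y 11 + x 12 * y 13 + x 13 * y 12
        + x 7 * y 9 + x 9 * y 7)
     - 2 * (x 14 * y 14 + x 15 * y 15)"
  unfolding lam_bil_def sum_lessThan_16
  by (simp add: lam_gram_def e8_cartan_def e8_edges_def doubleton_eq_iff algebra_simps)

lemma lam_bil_add_left: "lam_bil (\<lambda>i. x i + x' i) z = lam_bil x z + lam_bil x' z"
  unfolding lam_bil_def by (simp add: algebra_simps sum.distrib)

lemma lam_bil_add_right: "lam_bil x (\<lambda>i. z i + z' i) = lam_bil x z + lam_bil x z'"
  unfolding lam_bil_def by (simp add: algebra_simps sum.distrib)

lemma lam_bil_scale_left: "lam_bil (\<lambda>i. c * x i) z = c * lam_bil x z"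
  unfolding lam_bil_def by (simp add: sum_distrib_left mult_ac)

lemma lam_bil_scale_right: "lam_bil x (\<lambda>i. c * z i) = c * lam_bil x z"
  unfolding lam_bil_def by (simp add: sum_distrib_left mult_ac)

lemma lam_bil_commute: "lam_bil x z = lam_bil z x"
  by (simp add: lam_bil_explicit algebra_simps)

definition unit_vec :: "nat \<Rightarrow> nat \<Rightarrow> rat" where
  "unit_vec j = (\<lambda>i. if i = j then 1 else 0)"

lemma scaled_unit_vec_in_Lam:
  assumes "c \<in> \<int>" "j < 16"
  shows "(\<lambda>i. c * unit_vec j i) \<in> Lam"
  using assms by (auto simp: Lam_def unit_vec_def)

lemma lam_bil_self_even:
  assumes "z \<in> Lam"
  shows "\<exists>m::int. lam_bil z z = 2 * of_int m"
proof -
  have z: "z i \<in> \<int>" for i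
    using assms by (simp add: Lam_def)
  have "lam_bil z z = 2 * (2 * (z 0 * z 1 + z 2 * z 3 + z 4 * z 5)
      - (z 6 * z 6 + z 7 * z 7 + z 8 * z 8 + z 9 * z 9 + z 10 * z 10 + z 11 * z 11
         + z 12 * z 12 + z 13 * z 13)
      + (z 6 * z 8 + z 8 * z 9 + z 9 * z 10 + z 10 * z 11 + z 11 * z 12 + z 12 * z 13 + z 7 * z 9)
      - (z 14 * z 14 + z 15 * z 15))"
    (is "_ = 2 * ?m")
    by (simp add: lam_bil_explicit algebra_simps)
  moreover have "?m \<in> \<int>"
    by (intro Ints_add Ints_diff Ints_mult Ints_numeral z)
  then obtain m where "?m = of_int m"
    by (elim Ints_cases)
  ultimately show ?thesis
    by metis
qed

definition E8_free :: "(nat \<Rightarrow> rat) \<Rightarrow> bool" where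
  "E8_free x \<longleftrightarrow> (\<forall>i\<in>{6..<14}. x i = 0)"

lemma lam_bil_E8_free:
  assumes "E8_free x"
  shows "lam_bil x z = 2 * (x 0 * z 1 + x 1 * z 0 + x 2 * z 3 + x 3 * z 2 + x 4 * z 5 + x 5 * z 4
                            - x 14 * z 14 - x 15 * z 15)"
proof -
  have "x 6 = 0" "x 7 = 0" "x 8 = 0" "x 9 = 0" "x 10 = 0" "x 11 = 0" "x 12 = 0" "x 13 = 0"
    using assms by (simp_all add: E8_free_def)
  then show ?thesis
    by (simp add: lam_bil_explicit algebra_simps)
qed

lemma lam_bil_E8_free_even:
  assumes "x \<in> Lam" "E8_free x" "z \<in> Lam"
  shows "\<exists>m::int. lam_bil x z = 2 * of_int m"
proof -
  have "x i \<in> \<int>" "z i \<in> \<int>" for i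
    using assms by (simp_all add: Lam_def)
  then have "x 0 * z 1 + x 1 * z 0 + x 2 * z 3 + x 3 * z 2 + x 4 * z 5 + x 5 * z 4
             - x 14 * z 14 - x 15 * z 15 \<in> \<int>"
    by (intro Ints_add Ints_diff Ints_mult)
  then obtain m where "x 0 * z 1 + x 1 * z 0 + x 2 * z 3 + x 3 * z 2 + x 4 * z 5 + x 5 * z 4
             - x 14 * z 14 - x 15 * z 15 = of_int m"
    by (elim Ints_cases)
  then show ?thesis
    using lam_bil_E8_free[OF assms(2)] by metis
qed

lemma E8_free_pairing_two:
  assumes "x \<in> Lam" "E8_free x" "\<forall>i. x i \<in> {-1, 0, 1}" "lam_bil x x \<noteq> 0"
  obtains z where "z \<in> Lam" "lam_bil x z = 2"
proof -
  have x: "x i \<in> \<int>" for i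
    using assms(1) by (simp add: Lam_def)
  have sq: "x i * x i = 1" if "x i \<noteq> 0" for i
    using assms(3)[rule_format, of i] that by auto
  have "lam_bil x x = 2 * (2 * (x 0 * x 1 + x 2 * x 3 + x 4 * x 5) - x 14 * x 14 - x 15 * x 15)"
    using lam_bil_E8_free[OF assms(2)] by (simp add: algebra_simps)
  with assms(4) consider "x 0 \<noteq> 0" | "x 2 \<noteq> 0" | "x 4 \<noteq> 0" | "x 14 \<noteq> 0" | "x 15 \<noteq> 0"
    by fastforce
  then show thesis
  proof cases
    case 1
    then show ?thesis
      by (intro that[OF scaled_unit_vec_in_Lam[OF x[of 0], of 1]])
         (simp_all add: lam_bil_E8_free[OF assms(2)] unit_vec_def sq)
  next
    case 2
    then show ?thesis
      by (intro that[OF scaled_unit_vec_in_Lam[OF x[of 2], of 3]])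
         (simp_all add: lam_bil_E8_free[OF assms(2)] unit_vec_def sq)
  next
    case 3
    then show ?thesis
      by (intro that[OF scaled_unit_vec_in_Lam[OF x[of 4], of 5]])
         (simp_all add: lam_bil_E8_free[OF assms(2)] unit_vec_def sq)
  next
    case 4
    then show ?thesis
      by (intro that[OF scaled_unit_vec_in_Lam[OF Ints_minus[OF x[of 14]], of 14]])
         (simp_all add: lam_bil_E8_free[OF assms(2)] unit_vec_def sq)
  next
    case 5
    then show ?thesis
      by (intro that[OF scaled_unit_vec_in_Lam[OF Ints_minus[OF x[of 15]], of 15]])
         (simp_all add: lam_bil_E8_free[OF assms(2)] unit_vec_def sq)
  qed
qed

lemma E8_free_pairing_set:
  assumes "x \<in> Lam" "E8_free x" "\<forall>i. x i \<in> {-1, 0, 1}" "lam_bil x x \<noteq> 0"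
  shows "{lam_bil x z | z. z \<in> Lam} = {2 * of_int k | k::int. True}"
proof (intro equalityI subsetI)
  fix w
  assume "w \<in> {lam_bil x z | z. z \<in> Lam}"
  then show "w \<in> {2 * of_int k | k::int. True}"
    using lam_bil_E8_free_even[OF assms(1,2)] by auto
next
  fix w :: rat
  assume "w \<in> {2 * of_int k | k::int. True}"
  then obtain k :: int where w: "w = 2 * of_int k"
    by blast
  obtain z where "z \<in> Lam" "lam_bil x z = 2"
    using E8_free_pairing_two[OF assms] .
  then have "(\<lambda>i. of_int k * z i) \<in> Lam" "lam_bil x (\<lambda>i. of_int k * z i) = w"
    by (auto simp: Lam_def lam_bil_scale_right w)
  then show "w \<in> {lam_bil x z | z. z \<in> Lam}"
    by blast
qed

lemma lam_bil_half_shift_mod_2: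
  assumes "v \<in> Lam" "E8_free v" "(\<lambda>i. y i - v i / 2) \<in> Lam"
  shows "\<exists>m::int. lam_bil y y = lam_bil v v / 4 + 2 * of_int m"
proof -
  define l where "l = (\<lambda>i. y i - v i / 2)"
  have y: "y = (\<lambda>i. (1/2) * v i + l i)"
    by (simp add: l_def)
  have "lam_bil y y = lam_bil v v / 4 + (lam_bil v l + lam_bil l l)"
    unfolding y lam_bil_add_left lam_bil_add_right lam_bil_scale_left lam_bil_scale_right
    by (simp add: lam_bil_commute[of l v])
  moreover obtain m1 m2 :: int where "lam_bil v l = 2 * of_int m1" "lam_bil l l = 2 * of_int m2"
    using lam_bil_E8_free_even[OF assms(1,2)] lam_bil_self_even assms(3) unfolding l_def by blast
  ultimately have "lam_bil y y = lam_bil v v / 4 + 2 * of_int (m1 + m2)"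
    by simp
  then show ?thesis ..
qed

definition e8_cartan_inv :: "nat \<Rightarrow> nat \<Rightarrow> int" where
  "e8_cartan_inv i j =
     [[4, 5, 7, 10, 8, 6, 4, 2],
      [5, 8, 10, 15, 12, 9, 6, 3],
      [7, 10, 14, 20, 16, 12, 8, 4],
      [10, 15, 20, 30, 24, 18, 12, 6],
      [8, 12, 16, 24, 20, 15, 10, 5],
      [6, 9, 12, 18, 15, 12, 8, 4],
      [4, 6, 8, 12, 10, 8, 6, 3],
      [2, 3, 4, 6, 5, 4, 3, 2]] ! i ! j"

lemma E8_coord_by_cartan_inv:
  assumes "k < 8"
  shows "y (6 + k) = - (\<Sum>j<8. of_int (e8_cartan_inv k j) * lam_bil y (unit_vec (6 + j)))"
proof -
  have "k = 0 \<or> k = 1 \<or> k = 2 \<or> k = 3 \<or> k = 4 \<or> k = 5 \<or> k = 6 \<or> k = 7"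
    using assms by linarith
  then show ?thesis
    by (elim disjE)
      (simp_all add: sum_lessThan_8 e8_cartan_inv_def lam_bil_explicit unit_vec_def algebra_simps)
qed

lemma Lam_dual_pairing_unit_vec_Ints:
  assumes "y \<in> Lam_dual" "j < 16"
  shows "lam_bil y (unit_vec j) \<in> \<int>"
  using assms scaled_unit_vec_in_Lam[of 1 j] by (simp add: Lam_dual_def)

lemma Lam_dual_E8_coord_Ints:
  assumes "y \<in> Lam_dual" "i \<in> {6..<14}"
  shows "y i \<in> \<int>"
proof -
  define k where "k = i - 6"
  have k: "k < 8" "i = 6 + k"
    using assms(2) by (auto simp: k_def)
  have "(\<Sum>j<8. of_int (e8_cartan_inv k j) * lam_bil y (unit_vec (6 + j))) \<in> \<int>"
    using Lam_dual_pairing_unit_vec_Ints[OF assms(1)] by (intro Ints_sum Ints_mult) simp_all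
  then show ?thesis
    unfolding k(2) E8_coord_by_cartan_inv[OF k(1)] by (rule Ints_minus)
qed

lemma Lam_dual_double_coord_Ints:
  assumes "y \<in> Lam_dual"
  shows "2 * y i \<in> \<int>"
proof -
  have pair: "lam_bil y (unit_vec 1) = 2 * y 0" "lam_bil y (unit_vec 0) = 2 * y 1"
    "lam_bil y (unit_vec 3) = 2 * y 2" "lam_bil y (unit_vec 2) = 2 * y 3"
    "lam_bil y (unit_vec 5) = 2 * y 4" "lam_bil y (unit_vec 4) = 2 * y 5"
    "lam_bil y (unit_vec 14) = - (2 * y 14)" "lam_bil y (unit_vec 15) = - (2 * y 15)"
    by (simp_all add: lam_bil_explicit unit_vec_def)
  have half: "2 * y 0 \<in> \<int>" "2 * y 1 \<in> \<int>" "2 * y 2 \<in> \<int>" "2 * y 3 \<in> \<int>"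
    "2 * y 4 \<in> \<int>" "2 * y 5 \<in> \<int>" "2 * y 14 \<in> \<int>" "2 * y 15 \<in> \<int>"
    using Lam_dual_pairing_unit_vec_Ints[OF assms, of 0] Lam_dual_pairing_unit_vec_Ints[OF assms, of 1]
      Lam_dual_pairing_unit_vec_Ints[OF assms, of 2] Lam_dual_pairing_unit_vec_Ints[OF assms, of 3]
      Lam_dual_pairing_unit_vec_Ints[OF assms, of 4] Lam_dual_pairing_unit_vec_Ints[OF assms, of 5]
      Lam_dual_pairing_unit_vec_Ints[OF assms, of 14] Lam_dual_pairing_unit_vec_Ints[OF assms, of 15]
    unfolding pair by simp_all
  have "(6 \<le> i \<and> i < 14) \<or> 16 \<le> i
      \<or> i = 0 \<or> i = 1 \<or> i = 2 \<or> i = 3 \<or> i = 4 \<or> i = 5 \<or> i = 14 \<or> i = 15"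
    by presburger
  then show ?thesis
    using Lam_dual_E8_coord_Ints[OF assms, of i] assms half by (auto simp: Lam_dual_def)
qed

lemma Lam_dual_bit_representative:
  assumes "y \<in> Lam_dual"
  obtains \<rho> :: "nat \<Rightarrow> int"
  where "\<forall>i. \<rho> i \<in> {0, 1}" "\<forall>i\<ge>16. \<rho> i = 0" "E8_free (\<lambda>i. of_int (\<rho> i))"
    "(\<lambda>i. y i - of_int (\<rho> i) / 2) \<in> Lam"
proof
  define a where "a i = \<lfloor>2 * y i\<rfloor>" for i
  have a: "2 * y i = of_int (a i)" for i
    using Lam_dual_double_coord_Ints[OF assms, of i] by (auto simp: a_def elim: Ints_cases)
  show "\<forall>i. a i mod 2 \<in> {0, 1}"
    by (simp add: mod_2_eq_odd)
  show "\<forall>i\<ge>16. a i mod 2 = 0"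
    using assms by (simp add: a_def Lam_dual_def)
  have "a i mod 2 = 0" if i: "i \<in> {6..<14}" for i
  proof -
    obtain n where "y i = of_int n"
      using Lam_dual_E8_coord_Ints[OF assms i] by (elim Ints_cases)
    then have "a i = 2 * n"
      using a[of i] by (metis of_int_eq_iff of_int_mult of_int_numeral)
    then show ?thesis
      by simp
  qed
  then show "E8_free (\<lambda>i. of_int (a i mod 2))"
    by (simp add: E8_free_def)
  have "y i - of_int (a i mod 2) / 2 = of_int (a i div 2)" for i
  proof -
    have "a i = 2 * (a i div 2) + a i mod 2"
      by simp
    then have "(of_int (a i) :: rat) = 2 * of_int (a i div 2) + of_int (a i mod 2)"
      by (metis of_int_add of_int_mult of_int_numeral)
    with a[of i] show ?thesis
      by (simp add: field_simps)
  qed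
  then show "(\<lambda>i. y i - of_int (a i mod 2) / 2) \<in> Lam"
    using assms by (simp add: Lam_def Lam_dual_def a_def)
qed

lemma half_shift_sign_change:
  assumes "(\<lambda>i. y i - of_int (\<rho> i) / 2) \<in> Lam" "\<forall>i\<ge>16. \<rho> i = 0" "\<forall>i. \<sigma> i \<in> {-1, 1}"
  shows "(\<lambda>i. y i - of_int (\<sigma> i * \<rho> i) / 2) \<in> Lam"
proof -
  have shift: "y i - of_int (\<sigma> i * \<rho> i) / 2
      = (y i - of_int (\<rho> i) / 2) + of_int ((1 - \<sigma> i) div 2 * \<rho> i)" for i
    using assms(3)[rule_format, of i] by auto
  have "y i - of_int (\<sigma> i * \<rho> i) / 2 \<in> \<int>" for i
    unfolding shift using assms(1) by (intro Ints_add Ints_of_int) (simp add: Lam_def)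
  moreover have "y i = 0" if "16 \<le> i" for i
    using assms(1,2) that by (simp add: Lam_def)
  ultimately show ?thesis
    using assms(2) by (simp add: Lam_def)
qed

lemma signs_for_bit_sum:
  fixes p0 p1 p2 t :: int
  assumes "p0 \<in> {0, 1}" "p1 \<in> {0, 1}" "p2 \<in> {0, 1}" "t \<in> {0, 1, 2}"
    and "(2 * (p0 + p1 + p2) - t) mod 4 = 2"
  shows "\<exists>\<epsilon>0\<in>{-1, 1}. \<exists>\<epsilon>1\<in>{-1, 1}. \<exists>\<epsilon>2\<in>{-1, 1}.
           2 * (\<epsilon>0 * p0 + \<epsilon>1 * p1 + \<epsilon>2 * p2) - t = -2"
  using assms by auto

lemma bit_vector_sign_change_norm:
  fixes \<rho> :: "nat \<Rightarrow> int"
  assumes bits: "\<forall>i. \<rho> i \<in> {0, 1}" and free: "E8_free (\<lambda>i. of_int (\<rho> i))"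
    and odd: "lam_bil (\<lambda>i. of_int (\<rho> i)) (\<lambda>i. of_int (\<rho> i)) / 4 = 2 * of_int k + 1"
  obtains \<sigma> :: "nat \<Rightarrow> int"
  where "\<forall>i. \<sigma> i \<in> {-1, 1}" "E8_free (\<lambda>i. of_int (\<sigma> i * \<rho> i))"
    "lam_bil (\<lambda>i. of_int (\<sigma> i * \<rho> i)) (\<lambda>i. of_int (\<sigma> i * \<rho> i)) = -4"
proof -
  define p0 p1 p2 t where pt_def: "p0 = \<rho> 0 * \<rho> 1" "p1 = \<rho> 2 * \<rho> 3" "p2 = \<rho> 4 * \<rho> 5"
    "t = \<rho> 14 * \<rho> 14 + \<rho> 15 * \<rho> 15"
  have "lam_bil (\<lambda>i. of_int (\<rho> i)) (\<lambda>i. of_int (\<rho> i)) = of_int (2 * (2 * (p0 + p1 + p2) - t))"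
    unfolding lam_bil_E8_free[OF free] pt_def by (simp add: algebra_simps)
  with odd have "2 * (p0 + p1 + p2) - t = 4 * k + 2"
    by (simp add: field_simps flip: of_int_eq_iff)
  then have mod4: "(2 * (p0 + p1 + p2) - t) mod 4 = 2"
    by simp
  have "p0 \<in> {0, 1}" "p1 \<in> {0, 1}" "p2 \<in> {0, 1}" "t \<in> {0, 1, 2}"
    using bits[rule_format, of 0] bits[rule_format, of 1] bits[rule_format, of 2]
      bits[rule_format, of 3] bits[rule_format, of 4] bits[rule_format, of 5]
      bits[rule_format, of 14] bits[rule_format, of 15]
    unfolding pt_def by auto
  from signs_for_bit_sum[OF this mod4] obtain \<epsilon>0 \<epsilon>1 \<epsilon>2
    where signs: "\<epsilon>0 \<in> {-1, 1}" "\<epsilon>1 \<in> {-1, 1}" "\<epsilon>2 \<in> {-1, 1}"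
      and sum: "2 * (\<epsilon>0 * p0 + \<epsilon>1 * p1 + \<epsilon>2 * p2) - t = -2"
    by blast
  define \<sigma> where
    "\<sigma> i = (if i = 1 then \<epsilon>0 else if i = 3 then \<epsilon>1 else if i = 5 then \<epsilon>2 else 1)" for i :: nat
  have "\<forall>i. \<sigma> i \<in> {-1, 1}"
    using signs by (simp add: \<sigma>_def)
  moreover have free': "E8_free (\<lambda>i. of_int (\<sigma> i * \<rho> i))"
    using free by (simp add: E8_free_def)
  moreover have "lam_bil (\<lambda>i. of_int (\<sigma> i * \<rho> i)) (\<lambda>i. of_int (\<sigma> i * \<rho> i))
      = of_int (2 * (2 * (\<epsilon>0 * p0 + \<epsilon>1 * p1 + \<epsilon>2 * p2) - t))"
    unfolding lam_bil_E8_free[OF free'] pt_def by (simp add: \<sigma>_def algebra_simps)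
  then have "lam_bil (\<lambda>i. of_int (\<sigma> i * \<rho> i)) (\<lambda>i. of_int (\<sigma> i * \<rho> i)) = -4"
    unfolding sum by simp
  ultimately show thesis
    by (rule that)
qed

theorem lemma3p3:
  assumes "y \<in> Lam_dual"
    and "\<exists>k::int. lam_bil y y = 2 * of_int k + 1"
  shows "\<exists>x\<in>Lam. lam_bil x x = -4
            \<and> {lam_bil x z | z. z \<in> Lam} = {2 * of_int k | k::int. True}
            \<and> (\<lambda>i. y i - x i / 2) \<in> Lam"
proof -
  obtain \<rho> :: "nat \<Rightarrow> int" where bits: "\<forall>i. \<rho> i \<in> {0, 1}" and tail: "\<forall>i\<ge>16. \<rho> i = 0"
    and free: "E8_free (\<lambda>i. of_int (\<rho> i))" and shift: "(\<lambda>i. y i - of_int (\<rho> i) / 2) \<in> Lam"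
    using Lam_dual_bit_representative[OF assms(1)] by blast
  have "(\<lambda>i. of_int (\<rho> i)) \<in> Lam"
    using tail by (simp add: Lam_def)
  from lam_bil_half_shift_mod_2[OF this free shift] assms(2) obtain m k :: int
    where "lam_bil y y = lam_bil (\<lambda>i. of_int (\<rho> i)) (\<lambda>i. of_int (\<rho> i)) / 4 + 2 * of_int m"
      and "lam_bil y y = 2 * of_int k + 1"
    by blast
  then have "lam_bil (\<lambda>i. of_int (\<rho> i)) (\<lambda>i. of_int (\<rho> i)) / 4 = 2 * of_int (k - m) + 1"
    by simp
  then obtain \<sigma> where signs: "\<forall>i. \<sigma> i \<in> {-1, 1}" and "E8_free (\<lambda>i. of_int (\<sigma> i * \<rho> i))"
    and "lam_bil (\<lambda>i. of_int (\<sigma> i * \<rho> i)) (\<lambda>i. of_int (\<sigma> i * \<rho> i)) = -4"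
    using bit_vector_sign_change_norm[OF bits free] by blast
  moreover have "(\<lambda>i. of_int (\<sigma> i * \<rho> i)) \<in> Lam"
    using tail by (simp add: Lam_def)
  moreover have "\<forall>i. (of_int (\<sigma> i * \<rho> i) :: rat) \<in> {-1, 0, 1}"
  proof
    fix i
    show "(of_int (\<sigma> i * \<rho> i) :: rat) \<in> {-1, 0, 1}"
      using bits[rule_format, of i] signs[rule_format, of i] by auto
  qed
  moreover have "(\<lambda>i. y i - of_int (\<sigma> i * \<rho> i) / 2) \<in> Lam"
    by (rule half_shift_sign_change[OF shift tail signs])
  ultimately show ?thesis
    using E8_free_pairing_set by (intro bexI[of _ "\<lambda>i. of_int (\<sigma> i * \<rho> i)"]) simp_all
qed

end
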